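(* Let $G$ be a twin-free graph and let $t\ge 1$. (i) If $G=K_1$, then $\det(G)=0$ and $\det(\mu_t(G))=t$. (ii) If $G=H+K_1$ (disjoint union with one isolated vertex) for some graph $H$ with at least one edge, then $\det(\mu_t(G))=\det(G)+t-1$.
   Context: All graphs are finite and simple. For a graph $G$ with $V(G)=\{v_1,\dots,v_n\}$ and an integer $t\ge1$, the generalized Mycielskian $\mu_t(G)$ has vertex set $\{u_i^s: 1\le i\le n,\ 0\le s\le t\}\cup\{w\}$, where $u_i^0$ is identified with $v_i$. Its edges are: $u_i^0u_j^0$ for each edge $v_iv_j$ of $G$; $u_i^su_j^{s+1}$ and $u_j^su_i^{s+1}$ for each edge $v_iv_j$ of $G$ and each $0\le s<t$; and $u_i^tw$ for all $1\le i\le n$. A set $S\subseteq V(G)$ is a determining set for $G$ if the only automorphism of $G$ fixing every vertex of $S$ is the identity; $\det(G)$ is the minimum size of a determining set. Two vertices are twins if they have the same open neighborhood; $G$ is twin-free if it has no pair of distinct twin vertices. *)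

theory Defs
  imports Main
begin

type_synonym 'a graph = "'a set \<times> 'a set set"

definition verts :: "'a graph \<Rightarrow> 'a set" where "verts G = fst G"
definition edges :: "'a graph \<Rightarrow> 'a set set" where "edges G = snd G"

definition simple_graph :: "'a graph \<Rightarrow> bool" where
  "simple_graph G \<longleftrightarrow> finite (verts G) \<and>
     (\<forall>e\<in>edges G. \<exists>x y. e = {x, y} \<and> x \<noteq> y \<and> x \<in> verts G \<and> y \<in> verts G)"

definition adj :: "'a graph \<Rightarrow> 'a \<Rightarrow> 'a \<Rightarrow> bool" where
  "adj G x y \<longleftrightarrow> {x, y} \<in> edges G"

definition open_nbhd :: "'a graph \<Rightarrow> 'a \<Rightarrow> 'a set" where
  "open_nbhd G x = {y \<in> verts G. adj G x y}"

definition twin_free :: "'a graph \<Rightarrow> bool" where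
  "twin_free G \<longleftrightarrow> (\<forall>x\<in>verts G. \<forall>y\<in>verts G. x \<noteq> y \<longrightarrow> open_nbhd G x \<noteq> open_nbhd G y)"

definition automorphism :: "'a graph \<Rightarrow> ('a \<Rightarrow> 'a) \<Rightarrow> bool" where
  "automorphism G f \<longleftrightarrow> bij_betw f (verts G) (verts G) \<and>
     (\<forall>x\<in>verts G. \<forall>y\<in>verts G. adj G (f x) (f y) \<longleftrightarrow> adj G x y)"

definition determining_set :: "'a graph \<Rightarrow> 'a set \<Rightarrow> bool" where
  "determining_set G S \<longleftrightarrow> S \<subseteq> verts G \<and>
     (\<forall>f. automorphism G f \<longrightarrow> (\<forall>x\<in>S. f x = x) \<longrightarrow> (\<forall>x\<in>verts G. f x = x))"

definition det_num :: "'a graph \<Rightarrow> nat" where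
  "det_num G = (LEAST n. \<exists>S. determining_set G S \<and> card S = n)"

text \<open>Generalized Mycielskian: vertex u_i^s is Some (v_i, s), the root w is None.\<close>
definition mycielskian :: "nat \<Rightarrow> 'a graph \<Rightarrow> ('a \<times> nat) option graph" where
  "mycielskian t G =
    ({Some (v, s) | v s. v \<in> verts G \<and> s \<le> t} \<union> {None},
     {{Some (x, 0), Some (y, 0)} | x y. {x, y} \<in> edges G}
     \<union> {{Some (x, s), Some (y, Suc s)} | x y s. {x, y} \<in> edges G \<and> s < t}
     \<union> {{Some (x, t), None} | x. x \<in> verts G})"

end

theory Submission
  imports Defs "HOL-Combinatorics.Transposition"
begin

(* An automorphism of G acts on mu_t(G) through the first coordinate, so the first coordinates
   of a determining set of mu_t(G) determine G. If z is isolated in G, its copies (z,s), s < t,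
   are isolated in mu_t(G) and hence interchangeable: a determining set contains all but one of
   them. This gives the lower bounds.

   For the upper bound in (ii), (z,t) is the only vertex of mu_t(G) of degree one, so every
   automorphism fixes it and its neighbour w. Going down from the neighbourhood V x {t} of w,
   every layer V x {s} is preserved; on layer 0 the automorphism induces an automorphism of G,
   which is trivial once a determining set of G is fixed there, and twin-freeness lifts this
   identity layer by layer. In (i), (a,t) and w are interchangeable, which forces one more
   vertex into every determining set. *)

section \<open>Automorphisms and determining sets\<close>

lemma adj_commute: "adj G x y \<longleftrightarrow> adj G y x"
  unfolding adj_def by (simp add: insert_commute)

lemma simple_graph_adjD:
  "simple_graph G \<Longrightarrow> adj G x y \<Longrightarrow> x \<noteq> y \<and> x \<in> verts G \<and> y \<in> verts G"
  unfolding simple_graph_def adj_def by (metis doubleton_eq_iff)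

lemma open_nbhd_eq_empty_iff:
  "simple_graph G \<Longrightarrow> open_nbhd G z = {} \<longleftrightarrow> (\<forall>y. \<not> adj G z y)"
  unfolding open_nbhd_def using simple_graph_adjD by fastforce

lemma adj_in_open_nbhd: "simple_graph G \<Longrightarrow> adj G x y \<Longrightarrow> y \<in> open_nbhd G x"
  unfolding open_nbhd_def using simple_graph_adjD[of G x y] by simp

lemma determining_setD:
  "determining_set G S \<Longrightarrow> automorphism G f \<Longrightarrow> (\<And>x. x \<in> S \<Longrightarrow> f x = x) \<Longrightarrow>
    x \<in> verts G \<Longrightarrow> f x = x"
  unfolding determining_set_def by blast

lemma finite_determining_set: "simple_graph G \<Longrightarrow> determining_set G S \<Longrightarrow> finite S"
  unfolding simple_graph_def determining_set_def by (blast intro: finite_subset)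

lemma det_num_le: "determining_set G S \<Longrightarrow> det_num G \<le> card S"
  unfolding det_num_def by (rule Least_le) blast

lemma obtain_minimum_determining_set:
  obtains S where "determining_set G S" "card S = det_num G"
proof -
  have "determining_set G (verts G)" unfolding determining_set_def by auto
  then have "\<exists>n S. determining_set G S \<and> card S = n" by blast
  from LeastI_ex[OF this] that show thesis unfolding det_num_def by blast
qed

lemma automorphism_in_verts: "automorphism G f \<Longrightarrow> x \<in> verts G \<Longrightarrow> f x \<in> verts G"
  unfolding automorphism_def bij_betw_def by blast

lemma automorphism_image_open_nbhd:
  assumes f: "automorphism G f" and x: "x \<in> verts G"
  shows "f ` open_nbhd G x = open_nbhd G (f x)"
proof -
  have img: "f ` verts G = verts G" and adj: "\<And>y. y \<in> verts G \<Longrightarrow> adj G (f x) (f y) \<longleftrightarrow> adj G x y"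
    using f x unfolding automorphism_def bij_betw_def by auto
  show ?thesis
  proof (intro equalityI subsetI)
    fix y assume "y \<in> f ` open_nbhd G x"
    then show "y \<in> open_nbhd G (f x)" using img adj unfolding open_nbhd_def by auto
  next
    fix y assume y: "y \<in> open_nbhd G (f x)"
    then obtain y' where "y' \<in> verts G" "y = f y'" using img unfolding open_nbhd_def by auto
    with y show "y \<in> f ` open_nbhd G x" using adj unfolding open_nbhd_def by auto
  qed
qed

lemma automorphism_transpose:
  assumes "a \<in> verts G" "b \<in> verts G" "\<not> adj G a a" "\<not> adj G b b"
    and same: "\<And>y. y \<in> verts G \<Longrightarrow> y \<noteq> a \<Longrightarrow> y \<noteq> b \<Longrightarrow> adj G a y \<longleftrightarrow> adj G b y"
  shows "automorphism G (transpose a b)"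
  unfolding automorphism_def
proof (intro conjI ballI)
  show "bij_betw (transpose a b) (verts G) (verts G)" using assms(1,2) by simp
  have same': "adj G y a \<longleftrightarrow> adj G y b" if "y \<in> verts G" "y \<noteq> a" "y \<noteq> b" for y
    using same[OF that] by (simp add: adj_commute[of G y])
  have ab: "adj G b a \<longleftrightarrow> adj G a b" by (rule adj_commute)
  fix x y assume x: "x \<in> verts G" and y: "y \<in> verts G"
  show "adj G (transpose a b x) (transpose a b y) \<longleftrightarrow> adj G x y"
  proof (cases "x = a \<or> x = b")
    case True
    then show ?thesis using assms(3,4) same[OF y] ab
      by (cases "y = a \<or> y = b") (auto simp: transpose_def)
  next
    case False
    then show ?thesis using same'[OF x]
      by (cases "y = a \<or> y = b") (auto simp: transpose_def)
  qed
qed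

lemma determining_set_meets_swappable_pair:
  assumes S: "determining_set G S" and "a \<in> verts G" "b \<in> verts G" "a \<noteq> b"
    and "\<not> adj G a a" "\<not> adj G b b"
    and "\<And>y. y \<in> verts G \<Longrightarrow> y \<noteq> a \<Longrightarrow> y \<noteq> b \<Longrightarrow> adj G a y \<longleftrightarrow> adj G b y"
  shows "a \<in> S \<or> b \<in> S"
proof (rule ccontr)
  assume "\<not> (a \<in> S \<or> b \<in> S)"
  then have "\<forall>x\<in>S. transpose a b x = x" by (metis transpose_apply_other)
  moreover have "automorphism G (transpose a b)"
    using assms(2,3,5-) by (rule automorphism_transpose)
  ultimately have "transpose a b a = a" using S \<open>a \<in> verts G\<close> by (blast intro: determining_setD)
  with \<open>a \<noteq> b\<close> show False by simp
qed

lemma card_isolated_le_determining_set: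
  assumes S: "determining_set G S" and "finite I" "I \<subseteq> verts G"
    and isolated: "\<And>i y. i \<in> I \<Longrightarrow> \<not> adj G i y"
  shows "card I \<le> card (I \<inter> S) + 1"
proof -
  have "i = j" if "i \<in> I - S" "j \<in> I - S" for i j
    using determining_set_meets_swappable_pair[OF S, of i j] that \<open>I \<subseteq> verts G\<close> isolated
    by blast
  then have "card (I - S) \<le> Suc 0" using \<open>finite I\<close> by (subst card_le_Suc0_iff_eq) auto
  moreover have "card I = card (I \<inter> S) + card (I - S)"
    using \<open>finite I\<close> by (rule card_Int_Diff)
  ultimately show ?thesis by linarith
qed

lemma determining_set_Diff_fixed_point:
  assumes "determining_set G S" and "\<And>f. automorphism G f \<Longrightarrow> f z = z"
  shows "determining_set G (S - {z})"
  using assms unfolding determining_set_def by (metis Diff_iff Diff_subset singletonD subset_trans)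

lemma twin_free_automorphism_fixes_isolated:
  assumes "twin_free G" "automorphism G f" "z \<in> verts G" "open_nbhd G z = {}"
  shows "f z = z"
  using assms automorphism_image_open_nbhd[of G f z] automorphism_in_verts[of G f z]
  unfolding twin_free_def by (metis image_empty)

lemma bij_betw_fixes_last_point:
  assumes "bij_betw f A A" "x \<in> A" "\<And>y. y \<in> A \<Longrightarrow> y \<noteq> x \<Longrightarrow> f y = y"
  shows "f x = x"
  using assms unfolding bij_betw_def inj_on_def by (metis image_eqI)

lemma bij_betw_map_option:
  assumes "bij_betw f A B"
  shows "bij_betw (map_option f) (Some ` A \<union> {None}) (Some ` B \<union> {None})"
proof -
  have "inj_on (map_option f) (Some ` A \<union> {None})"
    using assms unfolding bij_betw_def inj_on_def by auto
  moreover have "map_option f ` (Some ` A \<union> {None}) = Some ` B \<union> {None}"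
    using assms unfolding bij_betw_def by (elim conjE, hypsubst) (simp add: image_Un image_image)
  ultimately show ?thesis unfolding bij_betw_def by blast
qed

section \<open>The generalized Mycielskian\<close>

lemma verts_mycielskian: "verts (mycielskian t G) = Some ` (verts G \<times> {..t}) \<union> {None}"
  unfolding mycielskian_def verts_def by auto

lemma Some_in_verts_mycielskian [simp]:
  "Some (v, s) \<in> verts (mycielskian t G) \<longleftrightarrow> v \<in> verts G \<and> s \<le> t"
  unfolding verts_mycielskian by auto

lemma None_in_verts_mycielskian [simp]: "None \<in> verts (mycielskian t G)"
  unfolding verts_mycielskian by auto

lemma adj_mycielskian_Some_Some:
  "adj (mycielskian t G) (Some (x, s)) (Some (y, r)) \<longleftrightarrow>
     adj G x y \<and> (s = 0 \<and> r = 0 \<or> r = Suc s \<and> s < t \<or> s = Suc r \<and> r < t)"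
  unfolding adj_def mycielskian_def edges_def by (auto simp: doubleton_eq_iff insert_commute)

lemma adj_mycielskian_Some_None:
  "adj (mycielskian t G) (Some (x, s)) None \<longleftrightarrow> s = t \<and> x \<in> verts G"
  unfolding adj_def mycielskian_def edges_def by (auto simp: doubleton_eq_iff)

lemma adj_mycielskian_None_Some:
  "adj (mycielskian t G) None (Some (x, s)) \<longleftrightarrow> s = t \<and> x \<in> verts G"
  using adj_commute adj_mycielskian_Some_None by metis

lemma not_adj_mycielskian_None_None: "\<not> adj (mycielskian t G) None None"
  unfolding adj_def mycielskian_def edges_def by (auto simp: doubleton_eq_iff)

lemmas adj_mycielskian =
  adj_mycielskian_Some_Some adj_mycielskian_Some_None adj_mycielskian_None_Some
  not_adj_mycielskian_None_None

lemma simple_graph_mycielskian: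
  assumes "simple_graph G"
  shows "simple_graph (mycielskian t G)"
proof -
  have "finite (verts (mycielskian t G))"
    using assms unfolding verts_mycielskian simple_graph_def by auto
  moreover have "\<exists>x y. e = {x, y} \<and> x \<noteq> y \<and> x \<in> verts (mycielskian t G) \<and> y \<in> verts (mycielskian t G)"
    if "e \<in> edges (mycielskian t G)" for e
  proof -
    from that consider
        x y where "e = {Some (x, 0), Some (y, 0)}" "adj G x y"
      | x y s where "e = {Some (x, s), Some (y, Suc s)}" "adj G x y" "s < t"
      | x where "e = {Some (x, t), None}" "x \<in> verts G"
      unfolding mycielskian_def edges_def adj_def by auto
    then show ?thesis
    proof cases
      case (1 x y)
      then show ?thesis using simple_graph_adjD[OF assms 1(2)]
        by (intro exI[of _ "Some (x, 0)"] exI[of _ "Some (y, 0)"]) simp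
    next
      case (2 x y s)
      then show ?thesis using simple_graph_adjD[OF assms 2(2)]
        by (intro exI[of _ "Some (x, s)"] exI[of _ "Some (y, Suc s)"]) simp
    next
      case (3 x)
      then show ?thesis by (intro exI[of _ "Some (x, t)"] exI[of _ None]) simp
    qed
  qed
  ultimately show ?thesis unfolding simple_graph_def by blast
qed

definition layer :: "'a graph \<Rightarrow> nat \<Rightarrow> ('a \<times> nat) option set" where
  "layer G s = Some ` (verts G \<times> {s})"

lemma layer_subset_verts_mycielskian: "s \<le> t \<Longrightarrow> layer G s \<subseteq> verts (mycielskian t G)"
  unfolding layer_def by auto

lemma open_nbhd_mycielskian_None: "open_nbhd (mycielskian t G) None = layer G t"
  unfolding open_nbhd_def layer_def verts_mycielskian
  by (auto simp: adj_mycielskian_None_Some not_adj_mycielskian_None_None)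

lemma automorphism_mycielskian_lift:
  assumes "automorphism G \<phi>"
  shows "automorphism (mycielskian t G) (map_option (map_prod \<phi> id))"
  unfolding automorphism_def
proof (intro conjI ballI)
  have "bij_betw \<phi> (verts G) (verts G)"
    and adj: "\<And>x y. x \<in> verts G \<Longrightarrow> y \<in> verts G \<Longrightarrow> adj G (\<phi> x) (\<phi> y) \<longleftrightarrow> adj G x y"
    using assms unfolding automorphism_def by auto
  then have "bij_betw (map_prod \<phi> id) (verts G \<times> {..t}) (verts G \<times> {..t})"
    by (intro bij_betw_map_prod bij_betw_id)
  then show "bij_betw (map_option (map_prod \<phi> id)) (verts (mycielskian t G)) (verts (mycielskian t G))"
    unfolding verts_mycielskian by (rule bij_betw_map_option)
  fix x y assume "x \<in> verts (mycielskian t G)" "y \<in> verts (mycielskian t G)"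
  then show "adj (mycielskian t G) (map_option (map_prod \<phi> id) x) (map_option (map_prod \<phi> id) y)
      \<longleftrightarrow> adj (mycielskian t G) x y"
    using automorphism_in_verts[OF assms] adj unfolding verts_mycielskian
    by (auto simp: adj_mycielskian)
qed

lemma automorphism_mycielskian_restrict:
  assumes \<sigma>: "automorphism (mycielskian t G) \<sigma>" and layer0: "\<sigma> ` layer G 0 = layer G 0"
  shows "automorphism G (\<lambda>v. fst (the (\<sigma> (Some (v, 0)))))"
proof -
  define \<phi> where "\<phi> v = fst (the (\<sigma> (Some (v, 0))))" for v
  have \<sigma>_Some: "\<sigma> (Some (v, 0)) = Some (\<phi> v, 0)" "\<phi> v \<in> verts G" if "v \<in> verts G" for v
  proof -
    have "\<sigma> (Some (v, 0)) \<in> layer G 0" using that layer0 unfolding layer_def by blast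
    then obtain u where "u \<in> verts G" "\<sigma> (Some (v, 0)) = Some (u, 0)" unfolding layer_def by blast
    then show "\<sigma> (Some (v, 0)) = Some (\<phi> v, 0)" "\<phi> v \<in> verts G" by (simp_all add: \<phi>_def)
  qed
  have inj: "inj_on \<sigma> (verts (mycielskian t G))"
    and adj: "\<And>x y. x \<in> verts (mycielskian t G) \<Longrightarrow> y \<in> verts (mycielskian t G) \<Longrightarrow>
      adj (mycielskian t G) (\<sigma> x) (\<sigma> y) \<longleftrightarrow> adj (mycielskian t G) x y"
    using \<sigma> unfolding automorphism_def bij_betw_def by auto
  have "inj_on \<phi> (verts G)"
  proof (rule inj_onI)
    fix u v assume "u \<in> verts G" "v \<in> verts G" "\<phi> u = \<phi> v"
    then have "\<sigma> (Some (u, 0)) = \<sigma> (Some (v, 0))" using \<sigma>_Some by metis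
    with \<open>u \<in> verts G\<close> \<open>v \<in> verts G\<close> show "u = v" using inj by (auto dest: inj_onD)
  qed
  moreover have "\<phi> ` verts G = verts G"
  proof (intro equalityI subsetI)
    fix v assume "v \<in> verts G"
    then have "Some (v, 0) \<in> \<sigma> ` layer G 0" using layer0 unfolding layer_def by auto
    then obtain u where "u \<in> verts G" "\<sigma> (Some (u, 0)) = Some (v, 0)" unfolding layer_def by auto
    then show "v \<in> \<phi> ` verts G" using \<sigma>_Some by force
  qed (use \<sigma>_Some in blast)
  moreover have "adj G (\<phi> x) (\<phi> y) \<longleftrightarrow> adj G x y" if "x \<in> verts G" "y \<in> verts G" for x y
    using adj[of "Some (x, 0)" "Some (y, 0)"] that by (simp add: \<sigma>_Some adj_mycielskian_Some_Some)
  ultimately have "automorphism G \<phi>" unfolding automorphism_def bij_betw_def by blast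
  then show ?thesis unfolding \<phi>_def .
qed

lemma determining_set_mycielskian_project:
  assumes S: "determining_set (mycielskian t G) S"
  shows "determining_set G {v. \<exists>s. Some (v, s) \<in> S}"
proof -
  have "f v = v" if f: "automorphism G f" and fixed: "\<And>v s. Some (v, s) \<in> S \<Longrightarrow> f v = v"
    and v: "v \<in> verts G" for f v
  proof -
    have "map_option (map_prod f id) x = x" if "x \<in> S" for x
      using that fixed by (cases x) auto
    with S automorphism_mycielskian_lift[OF f, of t]
    have "map_option (map_prod f id) x = x" if "x \<in> verts (mycielskian t G)" for x
      using that by (rule determining_setD)
    from this[of "Some (v, 0)"] v show "f v = v" by simp
  qed
  moreover have "{v. \<exists>s. Some (v, s) \<in> S} \<subseteq> verts G"
    using S unfolding determining_set_def by auto
  ultimately show ?thesis unfolding determining_set_def by blast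
qed

lemma not_adj_mycielskian_isolated_copy:
  assumes "\<And>u. \<not> adj G z u" "s < t"
  shows "\<not> adj (mycielskian t G) (Some (z, s)) y"
proof (cases y)
  case None
  then show ?thesis using assms(2) by (simp add: adj_mycielskian_Some_None)
next
  case (Some p)
  then show ?thesis using assms(1) by (cases p) (simp add: adj_mycielskian_Some_Some)
qed

lemma open_nbhd_mycielskian_isolated_copy:
  assumes "simple_graph G" "open_nbhd G z = {}" "s < t"
  shows "open_nbhd (mycielskian t G) (Some (z, s)) = {}"
proof -
  have "\<And>u. \<not> adj G z u" using assms(1,2) by (simp add: open_nbhd_eq_empty_iff)
  then have "\<not> adj (mycielskian t G) (Some (z, s)) y" for y
    using assms(3) by (rule not_adj_mycielskian_isolated_copy)
  then show ?thesis unfolding open_nbhd_def by simp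
qed

lemma open_nbhd_mycielskian_pendant:
  assumes "simple_graph G" "z \<in> verts G" "open_nbhd G z = {}"
  shows "open_nbhd (mycielskian t G) (Some (z, t)) = {None}"
proof -
  have "\<And>u. \<not> adj G z u" using assms(1,3) by (simp add: open_nbhd_eq_empty_iff)
  then have "adj (mycielskian t G) (Some (z, t)) y \<longleftrightarrow> y = None" for y
  proof (cases y)
    case None
    then show ?thesis using assms(2) by (simp add: adj_mycielskian_Some_None)
  next
    case (Some p)
    then show ?thesis using \<open>\<And>u. \<not> adj G z u\<close> by (cases p) (simp add: adj_mycielskian_Some_Some)
  qed
  then show ?thesis unfolding open_nbhd_def by (simp add: Collect_conj_eq)
qed

lemma mycielskian_two_neighbours:
  assumes "t \<ge> 1" "v \<in> verts G" "adj G v y" "s \<le> t"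
  obtains y\<^sub>1 y\<^sub>2 where "y\<^sub>1 \<noteq> y\<^sub>2"
    "adj (mycielskian t G) (Some (v, s)) y\<^sub>1" "adj (mycielskian t G) (Some (v, s)) y\<^sub>2"
proof -
  consider "s = t" | "s = 0" "s < t" | r where "s = Suc r" "s < t"
    using assms(4) not0_implies_Suc le_neq_implies_less by blast
  then show thesis
  proof cases
    case 1
    show thesis by (rule that[of None "Some (y, t - 1)"]) (use 1 assms in \<open>simp_all add: adj_mycielskian\<close>)
  next
    case 2
    show thesis by (rule that[of "Some (y, 0)" "Some (y, 1)"]) (use 2 assms in \<open>simp_all add: adj_mycielskian\<close>)
  next
    case (3 r)
    show thesis by (rule that[of "Some (y, r)" "Some (y, Suc s)"]) (use 3 assms in \<open>simp_all add: adj_mycielskian\<close>)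
  qed
qed

lemma mycielskian_automorphism_layer_step:
  assumes \<sigma>: "automorphism (mycielskian t G) \<sigma>" and root: "\<sigma> None = None"
    and isolated_fixed: "\<And>v s. v \<in> verts G \<Longrightarrow> open_nbhd G v = {} \<Longrightarrow> s < t \<Longrightarrow>
      \<sigma> (Some (v, s)) = Some (v, s)"
    and "j < t" and next_layer: "\<sigma> ` layer G (Suc j) = layer G (Suc j)"
    and next2_layer: "Suc (Suc j) \<le> t \<Longrightarrow> \<sigma> ` layer G (Suc (Suc j)) = layer G (Suc (Suc j))"
  shows "\<sigma> ` layer G j \<subseteq> layer G j"
proof
  have inj: "inj_on \<sigma> (verts (mycielskian t G))"
    and adj: "\<And>x y. x \<in> verts (mycielskian t G) \<Longrightarrow> y \<in> verts (mycielskian t G) \<Longrightarrow>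
      adj (mycielskian t G) (\<sigma> x) (\<sigma> y) \<longleftrightarrow> adj (mycielskian t G) x y"
    using \<sigma> unfolding automorphism_def bij_betw_def by auto
  fix x assume "x \<in> \<sigma> ` layer G j"
  then obtain v where v: "v \<in> verts G" and x: "x = \<sigma> (Some (v, j))" unfolding layer_def by auto
  have vM: "Some (v, j) \<in> verts (mycielskian t G)" using v \<open>j < t\<close> by simp
  have xM: "x \<in> verts (mycielskian t G)" using automorphism_in_verts[OF \<sigma> vM] x by simp
  show "x \<in> layer G j"
  proof (cases "open_nbhd G v = {}")
    case True
    then show ?thesis using isolated_fixed v \<open>j < t\<close> x unfolding layer_def by auto
  next
    case False
    then obtain y where y: "y \<in> verts G" "adj G v y" unfolding open_nbhd_def by auto
    have yM: "Some (y, Suc j) \<in> verts (mycielskian t G)" using y \<open>j < t\<close> by simp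
    obtain y' where y': "\<sigma> (Some (y, Suc j)) = Some (y', Suc j)"
      using next_layer y(1) unfolding layer_def by blast
    have "adj (mycielskian t G) x (Some (y', Suc j))"
      using adj[OF vM yM] y(2) y' x \<open>j < t\<close> by (simp add: adj_mycielskian_Some_Some)
    moreover have "x \<noteq> None"
      using inj vM root x by (metis None_in_verts_mycielskian inj_on_contraD option.distinct(1))
    ultimately obtain u r where u: "x = Some (u, r)"
      and r: "r = j \<or> r = Suc (Suc j) \<and> Suc j < t"
      by (cases x) (auto simp: adj_mycielskian_Some_Some)
    \<comment> \<open>Layer \<open>j + 2\<close> is already the image of itself, so it contains no image of layer \<open>j\<close>.\<close>
    have "r \<noteq> Suc (Suc j)"
    proof
      assume r2: "r = Suc (Suc j)"
      with r u xM next2_layer have "x \<in> \<sigma> ` layer G (Suc (Suc j))" unfolding layer_def by auto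
      then obtain w where "w \<in> verts G" "\<sigma> (Some (w, Suc (Suc j))) = \<sigma> (Some (v, j))"
        using x unfolding layer_def by auto
      with inj vM r r2 show False by (auto dest: inj_onD)
    qed
    with r u xM show ?thesis unfolding layer_def by auto
  qed
qed

lemma mycielskian_automorphism_preserves_layers:
  assumes simple: "simple_graph G" and \<sigma>: "automorphism (mycielskian t G) \<sigma>"
    and root: "\<sigma> None = None"
    and isolated_fixed: "\<And>v s. v \<in> verts G \<Longrightarrow> open_nbhd G v = {} \<Longrightarrow> s < t \<Longrightarrow>
      \<sigma> (Some (v, s)) = Some (v, s)"
  shows "j \<le> t \<Longrightarrow> \<sigma> ` layer G j = layer G j"
proof (induction "t - j" arbitrary: j rule: less_induct)
  case less
  show ?case
  proof (cases "j = t")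
    case True
    then show ?thesis
      using automorphism_image_open_nbhd[OF \<sigma> None_in_verts_mycielskian] root
      by (simp add: open_nbhd_mycielskian_None)
  next
    case False
    with less.prems have "j < t" by simp
    have "\<sigma> ` layer G j \<subseteq> layer G j"
      using \<sigma> root isolated_fixed \<open>j < t\<close>
    proof (rule mycielskian_automorphism_layer_step)
      show "\<sigma> ` layer G (Suc j) = layer G (Suc j)" using less.hyps \<open>j < t\<close> by simp
      show "\<sigma> ` layer G (Suc (Suc j)) = layer G (Suc (Suc j))" if "Suc (Suc j) \<le> t"
        using less.hyps that by simp
    qed
    moreover have "finite (layer G j)"
      using simple unfolding simple_graph_def layer_def by simp
    moreover have "inj_on \<sigma> (layer G j)"
      using \<sigma> layer_subset_verts_mycielskian[OF less.prems]
      unfolding automorphism_def bij_betw_def by (blast intro: inj_on_subset)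
    ultimately show ?thesis by (metis endo_inj_surj)
  qed
qed

lemma mycielskian_automorphism_fixes_layers:
  assumes twin_free: "twin_free G" and \<sigma>: "automorphism (mycielskian t G) \<sigma>"
    and layers: "\<And>s. s \<le> t \<Longrightarrow> \<sigma> ` layer G s = layer G s"
    and base: "\<And>v. v \<in> verts G \<Longrightarrow> \<sigma> (Some (v, 0)) = Some (v, 0)"
  shows "s \<le> t \<Longrightarrow> v \<in> verts G \<Longrightarrow> \<sigma> (Some (v, s)) = Some (v, s)"
proof (induction s arbitrary: v)
  case 0
  then show ?case by (simp add: base)
next
  case (Suc s)
  obtain v' where v': "v' \<in> verts G" "\<sigma> (Some (v, Suc s)) = Some (v', Suc s)"
    using layers[OF Suc.prems(1)] Suc.prems(2) unfolding layer_def by blast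
  have "adj G v y \<longleftrightarrow> adj G v' y" if y: "y \<in> verts G" for y
  proof -
    have "adj G v y \<longleftrightarrow> adj (mycielskian t G) (Some (v, Suc s)) (Some (y, s))"
      using Suc.prems by (simp add: adj_mycielskian_Some_Some)
    also have "\<dots> \<longleftrightarrow> adj (mycielskian t G) (\<sigma> (Some (v, Suc s))) (\<sigma> (Some (y, s)))"
      using \<sigma> Suc.prems y unfolding automorphism_def by simp
    also have "\<dots> \<longleftrightarrow> adj (mycielskian t G) (Some (v', Suc s)) (Some (y, s))"
      using v' Suc.IH Suc.prems y by simp
    also have "\<dots> \<longleftrightarrow> adj G v' y"
      using Suc.prems by (simp add: adj_mycielskian_Some_Some)
    finally show ?thesis .
  qed
  then have "open_nbhd G v = open_nbhd G v'" unfolding open_nbhd_def by blast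
  then have "v = v'" using twin_free Suc.prems(2) v'(1) unfolding twin_free_def by blast
  then show ?case using v' by simp
qed

lemma card_determining_set_mycielskian_isolated_copies:
  assumes "simple_graph G" "z \<in> verts G" "open_nbhd G z = {}"
    and S: "determining_set (mycielskian t G) S"
  shows "t \<le> card (S \<inter> Some ` ({z} \<times> {..<t})) + 1"
proof -
  let ?I = "Some ` ({z} \<times> {..<t})"
  have "\<And>u. \<not> adj G z u" using assms(1,3) by (simp add: open_nbhd_eq_empty_iff)
  then have "\<not> adj (mycielskian t G) i y" if "i \<in> ?I" for i y
    using that not_adj_mycielskian_isolated_copy by fastforce
  moreover have "?I \<subseteq> verts (mycielskian t G)" using assms(2) by auto
  ultimately have "card ?I \<le> card (?I \<inter> S) + 1"
    using S finite_imageI by (intro card_isolated_le_determining_set) blast+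
  moreover have "card ?I = t" by (simp add: card_image card_cartesian_product)
  ultimately show ?thesis by (simp add: Int_commute)
qed

section \<open>A single vertex\<close>

lemma det_num_single_vertex:
  assumes "verts G = {a}"
  shows "det_num G = 0"
proof -
  have "determining_set G {}"
    using assms unfolding determining_set_def automorphism_def bij_betw_def by auto
  then show ?thesis using det_num_le[of G "{}"] by simp
qed

lemma det_num_mycielskian_single_vertex:
  assumes simple: "simple_graph G" and V: "verts G = {a}" and "t \<ge> 1"
  shows "det_num (mycielskian t G) = t"
proof -
  let ?M = "mycielskian t G" and ?P = "Some (a, t)" and ?I = "Some ` ({a} \<times> {..<t})"
  have a_isolated: "open_nbhd G a = {}"
    using V simple_graph_adjD[OF simple] unfolding open_nbhd_def by auto
  have pendant: "open_nbhd ?M ?P = {None}"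
    using simple _ a_isolated by (rule open_nbhd_mycielskian_pendant) (simp add: V)
  have root: "open_nbhd ?M None = {?P}"
    using V by (simp add: open_nbhd_mycielskian_None layer_def)
  let ?S = "Some ` ({a} \<times> {1..t})"
  have "determining_set ?M ?S"
    unfolding determining_set_def
  proof (intro conjI allI impI ballI)
    show "?S \<subseteq> verts ?M" using V by auto
    fix \<sigma> x assume \<sigma>: "automorphism ?M \<sigma>" and fixed: "\<forall>x\<in>?S. \<sigma> x = x" and x: "x \<in> verts ?M"
    have "\<sigma> ?P = ?P" using fixed \<open>t \<ge> 1\<close> by simp
    then have "\<sigma> None = None"
      using automorphism_image_open_nbhd[OF \<sigma>, of ?P] pendant V by simp
    then have "\<sigma> y = y" if "y \<in> verts ?M" "y \<noteq> Some (a, 0)" for y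
      using that fixed V unfolding verts_mycielskian by fastforce
    moreover have "bij_betw \<sigma> (verts ?M) (verts ?M)"
      using \<sigma> unfolding automorphism_def by blast
    ultimately show "\<sigma> x = x"
      using x bij_betw_fixes_last_point[of \<sigma> "verts ?M" "Some (a, 0)"] V by fastforce
  qed
  then have "det_num ?M \<le> t"
    using det_num_le[of ?M ?S] by (simp add: card_image card_cartesian_product)
  moreover obtain S where S: "determining_set ?M S" "card S = det_num ?M"
    by (rule obtain_minimum_determining_set)
  have "finite S" using simple_graph_mycielskian[OF simple] S(1) by (rule finite_determining_set)
  have "t \<le> card (S \<inter> ?I) + 1"
    using simple _ a_isolated S(1) by (rule card_determining_set_mycielskian_isolated_copies) (simp add: V)
  \<comment> \<open>\<open>(a, t)\<close> and the root are adjacent only to each other.\<close>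
  moreover have "?P \<in> S \<or> None \<in> S"
  proof (rule determining_set_meets_swappable_pair[OF S(1)])
    show "adj ?M ?P y \<longleftrightarrow> adj ?M None y" if "y \<in> verts ?M" "y \<noteq> ?P" "y \<noteq> None" for y
      using that pendant root unfolding open_nbhd_def by blast
  qed (use V simple_graph_adjD[OF simple_graph_mycielskian[OF simple]] in auto)
  then obtain q where "q \<in> S" "q \<notin> ?I" by auto
  then have "card (S \<inter> ?I) + 1 \<le> card S"
    using \<open>finite S\<close> card_mono[of S "insert q (S \<inter> ?I)"] by simp
  ultimately show ?thesis using S(2) by linarith
qed

section \<open>Graphs with an isolated vertex\<close>

locale graph_plus_isolated_vertex =
  fixes G :: "'a graph" and z :: 'a
  assumes simple: "simple_graph G" and twin_free: "twin_free G"
    and z_vertex: "z \<in> verts G" and z_isolated: "open_nbhd G z = {}"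
    and has_edge: "edges G \<noteq> {}"
begin

lemma isolated_imp_eq_z: "v \<in> verts G \<Longrightarrow> open_nbhd G v = {} \<Longrightarrow> v = z"
  using twin_free z_vertex z_isolated unfolding twin_free_def by blast

lemma obtain_other_vertex:
  obtains a where "a \<in> verts G" "a \<noteq> z"
proof -
  obtain e where "e \<in> edges G" using has_edge by blast
  then obtain x y where "x \<noteq> y" "x \<in> verts G" "y \<in> verts G"
    using simple unfolding simple_graph_def by blast
  then show thesis using that by (cases "x = z") auto
qed

lemma mycielskian_at_most_one_neighbour:
  assumes "t \<ge> 1" "q \<in> verts (mycielskian t G)"
    and one: "\<And>y\<^sub>1 y\<^sub>2. adj (mycielskian t G) q y\<^sub>1 \<Longrightarrow> adj (mycielskian t G) q y\<^sub>2 \<Longrightarrow> y\<^sub>1 = y\<^sub>2"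
  obtains s where "s \<le> t" "q = Some (z, s)"
proof (cases q)
  case None
  obtain a where "a \<in> verts G" "a \<noteq> z" by (rule obtain_other_vertex)
  then show thesis
    using one[of "Some (z, t)" "Some (a, t)"] None z_vertex by (simp add: adj_mycielskian_None_Some)
next
  case (Some p)
  then obtain v s where q: "q = Some (v, s)" "v \<in> verts G" "s \<le> t"
    using assms(2) by (cases p) auto
  show thesis
  proof (cases "v = z")
    case False
    then obtain y where "adj G v y"
      using isolated_imp_eq_z[OF q(2)] unfolding open_nbhd_def by auto
    with q assms(1) obtain y\<^sub>1 y\<^sub>2 where "y\<^sub>1 \<noteq> y\<^sub>2"
      "adj (mycielskian t G) q y\<^sub>1" "adj (mycielskian t G) q y\<^sub>2"
      by (metis mycielskian_two_neighbours)
    then show thesis using one by blast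
  qed (use q that in simp)
qed

lemma mycielskian_pendant_unique:
  assumes "t \<ge> 1" "q \<in> verts (mycielskian t G)" "open_nbhd (mycielskian t G) q = {y}"
  shows "q = Some (z, t)"
proof -
  obtain s where "s \<le> t" "q = Some (z, s)"
    using assms adj_in_open_nbhd[OF simple_graph_mycielskian[OF simple]]
    by (metis mycielskian_at_most_one_neighbour singletonD)
  moreover have "s = t"
    using open_nbhd_mycielskian_isolated_copy[OF simple z_isolated, of s t] assms(3) calculation by fastforce
  ultimately show ?thesis by simp
qed

lemma mycielskian_isolated_vertex:
  assumes "t \<ge> 1" "q \<in> verts (mycielskian t G)" "open_nbhd (mycielskian t G) q = {}"
  obtains s where "s < t" "q = Some (z, s)"
proof -
  obtain s where "s \<le> t" "q = Some (z, s)"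
    using assms adj_in_open_nbhd[OF simple_graph_mycielskian[OF simple]]
    by (metis mycielskian_at_most_one_neighbour empty_iff)
  moreover have "s \<noteq> t"
    using open_nbhd_mycielskian_pendant[OF simple z_vertex z_isolated, of t] assms(3) calculation by auto
  ultimately show thesis using that by simp
qed

text \<open>\<open>(z, t)\<close> is the only pendant vertex, and \<open>(z, 0)\<close> the only isolated vertex not fixed
  by hypothesis.\<close>

lemma mycielskian_automorphism_fixes_z_copies:
  assumes "t \<ge> 1" and \<sigma>: "automorphism (mycielskian t G) \<sigma>"
    and middle: "\<And>s. 0 < s \<Longrightarrow> s < t \<Longrightarrow> \<sigma> (Some (z, s)) = Some (z, s)"
  shows "\<sigma> None = None \<and> (\<forall>s\<le>t. \<sigma> (Some (z, s)) = Some (z, s))"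
proof -
  have inj: "inj_on \<sigma> (verts (mycielskian t G))"
    using \<sigma> unfolding automorphism_def bij_betw_def by blast
  have zM: "Some (z, s) \<in> verts (mycielskian t G)" if "s \<le> t" for s
    using z_vertex that by simp
  have pendant: "open_nbhd (mycielskian t G) (Some (z, t)) = {None}"
    using simple z_vertex z_isolated by (rule open_nbhd_mycielskian_pendant)
  then have "open_nbhd (mycielskian t G) (\<sigma> (Some (z, t))) = {\<sigma> None}"
    using automorphism_image_open_nbhd[OF \<sigma> zM] by (metis image_empty image_insert order_refl)
  moreover then have top: "\<sigma> (Some (z, t)) = Some (z, t)"
    using mycielskian_pendant_unique[OF \<open>t \<ge> 1\<close> automorphism_in_verts[OF \<sigma> zM]] by blast
  ultimately have root: "\<sigma> None = None" using pendant by simp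
  have "open_nbhd (mycielskian t G) (\<sigma> (Some (z, 0))) = {}"
    using automorphism_image_open_nbhd[OF \<sigma> zM] \<open>t \<ge> 1\<close>
      open_nbhd_mycielskian_isolated_copy[OF simple z_isolated, of 0 t]
    by (metis image_empty le0 less_le_trans zero_less_one)
  then obtain r where "r < t" and r: "\<sigma> (Some (z, 0)) = Some (z, r)"
    using mycielskian_isolated_vertex[OF \<open>t \<ge> 1\<close> automorphism_in_verts[OF \<sigma> zM]] by blast
  have bottom: "\<sigma> (Some (z, 0)) = Some (z, 0)"
  proof (cases "r = 0")
    case False
    with \<open>r < t\<close> r middle have "\<sigma> (Some (z, r)) = \<sigma> (Some (z, 0))" by simp
    then have "Some (z, r) = Some (z, 0)"
      using inj_onD[OF inj] zM \<open>r < t\<close> by (metis le0 less_imp_le)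
    then have "r = 0" by simp
    with False show ?thesis by simp
  qed (use r in simp)
  have "\<sigma> (Some (z, s)) = Some (z, s)" if "s \<le> t" for s
    using that top bottom middle by (cases "s = 0 \<or> s = t") (auto simp: le_less)
  with root show ?thesis by blast
qed

lemma determining_set_mycielskian:
  assumes "t \<ge> 1" and D: "determining_set G D"
  shows "determining_set (mycielskian t G) (Some ` ((D - {z}) \<times> {0}) \<union> Some ` ({z} \<times> {1..<t}))"
    (is "determining_set _ ?S")
  unfolding determining_set_def
proof (intro conjI allI impI ballI)
  show "?S \<subseteq> verts (mycielskian t G)"
    using D z_vertex unfolding determining_set_def by auto
  fix \<sigma> x assume \<sigma>: "automorphism (mycielskian t G) \<sigma>" and fixed: "\<forall>x\<in>?S. \<sigma> x = x"
    and x: "x \<in> verts (mycielskian t G)"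
  have "\<sigma> None = None" and z_copies: "\<And>s. s \<le> t \<Longrightarrow> \<sigma> (Some (z, s)) = Some (z, s)"
    using mycielskian_automorphism_fixes_z_copies[OF \<open>t \<ge> 1\<close> \<sigma>] fixed by auto
  have layers: "\<And>s. s \<le> t \<Longrightarrow> \<sigma> ` layer G s = layer G s"
    using simple \<sigma> \<open>\<sigma> None = None\<close>
  proof (rule mycielskian_automorphism_preserves_layers)
    show "\<sigma> (Some (v, s)) = Some (v, s)" if "v \<in> verts G" "open_nbhd G v = {}" "s < t" for v s
      using that isolated_imp_eq_z z_copies by simp
  qed
  have layer0: "\<sigma> ` layer G 0 = layer G 0" using layers by simp
  define \<phi> where "\<phi> v = fst (the (\<sigma> (Some (v, 0))))" for v
  have "automorphism G \<phi>"
    unfolding \<phi>_def using \<sigma> layer0 by (rule automorphism_mycielskian_restrict)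
  moreover have "\<phi> v = v" if "v \<in> D" for v
  proof (cases "v = z")
    case False
    with that have "Some (v, 0) \<in> ?S" by blast
    with fixed show ?thesis unfolding \<phi>_def by simp
  qed (simp add: \<phi>_def z_copies)
  ultimately have \<phi>_id: "\<phi> v = v" if "v \<in> verts G" for v
    using D that determining_setD by metis
  have base: "\<sigma> (Some (v, 0)) = Some (v, 0)" if "v \<in> verts G" for v
  proof -
    have "\<sigma> (Some (v, 0)) \<in> layer G 0" using that layer0 unfolding layer_def by blast
    then obtain u where "\<sigma> (Some (v, 0)) = Some (u, 0)" unfolding layer_def by blast
    with \<phi>_id[OF that] show ?thesis unfolding \<phi>_def by simp
  qed
  have "\<sigma> (Some (v, s)) = Some (v, s)" if "s \<le> t" "v \<in> verts G" for v s
    using twin_free \<sigma> layers base that by (rule mycielskian_automorphism_fixes_layers)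
  then show "\<sigma> x = x" using x \<open>\<sigma> None = None\<close> unfolding verts_mycielskian by auto
qed

lemma det_num_le_card_determining_set_mycielskian:
  assumes S: "determining_set (mycielskian t G) S"
  shows "det_num G + (t - 1) \<le> card S"
proof -
  let ?A = "S \<inter> Some ` ((- {z}) \<times> UNIV)" and ?I = "S \<inter> Some ` ({z} \<times> {..<t})"
  have "finite S" using simple_graph_mycielskian[OF simple] S by (rule finite_determining_set)
  have "determining_set G ({v. \<exists>s. Some (v, s) \<in> S} - {z})"
    using determining_set_mycielskian_project[OF S]
    by (rule determining_set_Diff_fixed_point)
      (rule twin_free_automorphism_fixes_isolated[OF twin_free _ z_vertex z_isolated])
  moreover have "{v. \<exists>s. Some (v, s) \<in> S} - {z} = (fst \<circ> the) ` ?A" by force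
  ultimately have "det_num G \<le> card ((fst \<circ> the) ` ?A)" by (metis det_num_le)
  also have "\<dots> \<le> card ?A" using \<open>finite S\<close> by (intro card_image_le) simp
  finally have "det_num G \<le> card ?A" .
  moreover have "t \<le> card ?I + 1"
    using simple z_vertex z_isolated S by (rule card_determining_set_mycielskian_isolated_copies)
  moreover have "card ?A + card ?I \<le> card S"
    using \<open>finite S\<close> by (subst card_Un_disjoint[symmetric]) (auto intro: card_mono)
  ultimately show ?thesis by linarith
qed

theorem det_num_mycielskian:
  assumes "t \<ge> 1"
  shows "det_num (mycielskian t G) = det_num G + t - 1"
proof -
  obtain D where D: "determining_set G D" "card D = det_num G"
    by (rule obtain_minimum_determining_set)
  let ?S = "Some ` ((D - {z}) \<times> {0}) \<union> Some ` ({z} \<times> {1..<t})"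
  have "det_num (mycielskian t G) \<le> card ?S"
    using determining_set_mycielskian[OF assms D(1)] by (rule det_num_le)
  also have "\<dots> \<le> card (Some ` ((D - {z}) \<times> {0::nat})) + card (Some ` ({z} \<times> {1..<t}))"
    by (rule card_Un_le)
  also have "\<dots> = card (D - {z}) + (t - 1)"
    by (simp add: card_image card_cartesian_product)
  also have "\<dots> \<le> det_num G + (t - 1)"
    using D(2) card_Diff1_le[of D z] by simp
  finally have "det_num (mycielskian t G) \<le> det_num G + (t - 1)" .
  moreover obtain S where "determining_set (mycielskian t G) S" "card S = det_num (mycielskian t G)"
    by (rule obtain_minimum_determining_set)
  then have "det_num G + (t - 1) \<le> det_num (mycielskian t G)"
    using det_num_le_card_determining_set_mycielskian by metis
  ultimately show ?thesis using assms by linarith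
qed

end

theorem mainTheorem2:
  fixes G :: "'a graph" and t :: nat
  assumes "simple_graph G" and "twin_free G" and "t \<ge> 1"
  shows "(card (verts G) = 1 \<longrightarrow>
            det_num G = 0 \<and> det_num (mycielskian t G) = t)
       \<and> ((\<exists>z\<in>verts G. (\<forall>e\<in>edges G. z \<notin> e) \<and> edges G \<noteq> {}) \<longrightarrow>
            det_num (mycielskian t G) = det_num G + t - 1)"
proof (intro conjI[OF impI impI])
  assume "card (verts G) = 1"
  then obtain a where "verts G = {a}" by (auto simp: card_1_singleton_iff)
  then show "det_num G = 0 \<and> det_num (mycielskian t G) = t"
    using assms(1,3) by (simp add: det_num_single_vertex det_num_mycielskian_single_vertex)
next
  assume "\<exists>z\<in>verts G. (\<forall>e\<in>edges G. z \<notin> e) \<and> edges G \<noteq> {}"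
  then obtain z where z: "z \<in> verts G" "\<forall>e\<in>edges G. z \<notin> e" "edges G \<noteq> {}" by blast
  then have "\<And>y. {z, y} \<notin> edges G" by blast
  then have "open_nbhd G z = {}" unfolding open_nbhd_def adj_def by simp
  with assms z interpret graph_plus_isolated_vertex G z by unfold_locales
  show "det_num (mycielskian t G) = det_num G + t - 1"
    using assms(3) by (rule det_num_mycielskian)
qed

end
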